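(* Let $S\in\mathbb{R}^{n_\theta\times n_\theta}$, $F\in\mathbb{R}^{n_x\times n_\theta}$, and $\theta_0\in\mathbb{R}^{n_\theta}$ satisfy the standing assumptions in the context, with excited modes $v_1,\dots,v_{k_1+k_2}$ and eigenvalues $\lambda_1,\dots,\lambda_{k_1+k_2}$. Let $y_n$, $z_\ell$, $Z_\ell$, $Y_n$ and $w_j$ be as defined in the context. (i) For every $\ell\ge 0$, the vectors $z_0,z_1,\dots,z_\ell$ are pairwise orthogonal. Some of them may be the zero vector. (ii) Assume further that $\lambda_1,\dots,\lambda_{k_1+k_2}$ are pairwise distinct, and that $\lambda_i\neq 1$ for every $i=1,\dots,k_1$. Let $n\ge 1$ and let $m$ be an integer with $1\le m\le \min(n,k_1)$. Then $w_1,\dots,w_m$ are linearly independent. Here $w_1,\dots,w_m$ are the first $m$ columns of the matrix $[\,y_1,\ Y_n\,]$.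
   Context: Standing assumptions: $S\in\mathbb{R}^{n_\theta\times n_\theta}$ and $F\in\mathbb{R}^{n_x\times n_\theta}$. $F^\dagger$ denotes the Moore–Penrose pseudoinverse, so that $F^\dagger F$ is the orthogonal projection onto $\mathcal{R}(F^\top)$. The initial vector $\theta_0\in\mathbb{R}^{n_\theta}$ can be written as $\theta_0=\sum_{i=1}^{k_1+k_2}\rho_i v_i$ with $\rho_i\in\mathbb{C}\setminus\{0\}$, where each $v_i\in\mathbb{C}^{n_\theta}$ is an eigenvector of $S$, i.e. $Sv_i=\lambda_i v_i$. The first $k_1$ of them lie in $\mathcal{R}(F^\top)$ (complexified), i.e. $F^\dagger F v_i=v_i$ for $i\le k_1$. The remaining $k_2$ lie in $\mathcal{R}(F^\top)^\perp$, i.e. $F^\dagger F v_i=0$ for $k_1<i\le k_1+k_2$. These $v_i$ are called the excited modes of $S$. Data: for $n\ge1$ let $y_n:=F^\dagger F\,S^{n-1}(S-I)\theta_0\in\mathbb{R}^{n_\theta}$. In the paper, $y_n=F^\dagger(\Delta x_n-\Delta f_n)$ is computed from state measurements, and the trapezoidal integration error is assumed to be zero, which gives this identity. Recursions: - Set $z_0:=y_1$ and $Z_0:=[z_0]$. - For $\ell\ge1$, set $z_\ell:=(I-Z_{\ell-1}Z_{\ell-1}^\dagger)\,y_{\ell+1}$, which is the orthogonal projection of $y_{\ell+1}$ onto $\mathcal{R}(Z_{\ell-1})^\perp$. Then set $Z_\ell:=[\,Z_{\ell-1},\ z_\ell\,]=[z_0,\dots,z_\ell]$. - Set $Y_2:=[\,y_2\,]$.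 For $n\ge3$, set $Y_n:=[\,Y_{n-1},\ y_n-Y_{n-1}Z_{n-3}^\dagger y_{n-1}\,]$. Finally define $w_1:=y_1$, $w_2:=y_2$, and for $j\ge3$ let $w_j:=y_j-Y_{j-1}Z_{j-3}^\dagger y_{j-1}$, the last column of $Y_j$. Thus $[\,y_1,\ Y_n\,]=[w_1,\dots,w_n]$. *)

theory Defs
  imports "Jordan_Normal_Form.Matrix"
begin

definition pinv :: "real mat \<Rightarrow> real mat" where
  "pinv A = (THE X. X \<in> carrier_mat (dim_col A) (dim_row A)
              \<and> A * X * A = A \<and> X * A * X = X
              \<and> transpose_mat (A * X) = A * X \<and> transpose_mat (X * A) = X * A)"

definition yv :: "real mat \<Rightarrow> real mat \<Rightarrow> real vec \<Rightarrow> nat \<Rightarrow> real vec" where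
  "yv S F th n = (pinv F * F * (S ^\<^sub>m (n - 1)) * (S - 1\<^sub>m (dim_row S))) *\<^sub>v th"

fun zs :: "real mat \<Rightarrow> real mat \<Rightarrow> real vec \<Rightarrow> nat \<Rightarrow> real vec list" where
  "zs S F th 0 = [yv S F th 1]"
| "zs S F th (Suc l) =
     (let Z = mat_of_cols (dim_vec th) (zs S F th l)
      in zs S F th l @ [(1\<^sub>m (dim_vec th) - Z * pinv Z) *\<^sub>v yv S F th (l + 2)])"

definition Zmat :: "real mat \<Rightarrow> real mat \<Rightarrow> real vec \<Rightarrow> nat \<Rightarrow> real mat" where
  "Zmat S F th l = mat_of_cols (dim_vec th) (zs S F th l)"

definition zv :: "real mat \<Rightarrow> real mat \<Rightarrow> real vec \<Rightarrow> nat \<Rightarrow> real vec" where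
  "zv S F th l = last (zs S F th l)"

fun Ycols :: "real mat \<Rightarrow> real mat \<Rightarrow> real vec \<Rightarrow> nat \<Rightarrow> real vec list" where
  "Ycols S F th 0 = []"
| "Ycols S F th (Suc 0) = []"
| "Ycols S F th (Suc (Suc 0)) = [yv S F th 2]"
| "Ycols S F th (Suc (Suc (Suc k))) =
     Ycols S F th (Suc (Suc k)) @
       [yv S F th (k + 3)
        - (mat_of_cols (dim_vec th) (Ycols S F th (Suc (Suc k))) * pinv (Zmat S F th k))
            *\<^sub>v yv S F th (k + 2)]"

definition Ymat :: "real mat \<Rightarrow> real mat \<Rightarrow> real vec \<Rightarrow> nat \<Rightarrow> real mat" where
  "Ymat S F th n = mat_of_cols (dim_vec th) (Ycols S F th n)"

definition Wmat :: "real mat \<Rightarrow> real mat \<Rightarrow> real vec \<Rightarrow> nat \<Rightarrow> real mat" where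
  "Wmat S F th n = mat_of_cols (dim_vec th) (yv S F th 1 # Ycols S F th n)"

end

theory Submission
  imports Defs "HOL-Computational_Algebra.Polynomial"
begin

text \<open>
  Orthogonality: if the columns of \<open>Z\<close> are pairwise orthogonal, its pseudoinverse is explicit
  (row \<open>j\<close> is \<open>z\<^sub>j / \<parallel>z\<^sub>j\<parallel>\<^sup>2\<close>), and \<open>I - Z Z\<^sup>+\<close> maps into the orthogonal complement of
  the columns; so each new \<open>z\<^sub>l\<close> is orthogonal to the previous ones.

  Independence: expanding \<open>\<theta>\<^sub>0\<close> in the excited modes, \<open>y\<^sub>k\<^sub>+\<^sub>1 = \<Sum>\<^sub>i\<^sub>\<le>\<^sub>k\<^sub>1 \<rho>\<^sub>i (\<lambda>\<^sub>i - 1) \<lambda>\<^sub>i\<^sup>k v\<^sub>i\<close>.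
  Since \<open>w\<^sub>j\<close> is \<open>y\<^sub>j\<close> minus a combination of earlier columns, \<open>w\<^sub>j\<^sub>+\<^sub>1 = \<Sum>\<^sub>i\<^sub>\<le>\<^sub>k\<^sub>1 \<rho>\<^sub>i (\<lambda>\<^sub>i - 1) p\<^sub>j(\<lambda>\<^sub>i) v\<^sub>i\<close>
  with \<open>p\<^sub>j\<close> monic of degree \<open>j\<close>. If \<open>\<Sum> c\<^sub>j w\<^sub>j = 0\<close>, independence of eigenvectors for distinct
  eigenvalues (with \<open>\<rho>\<^sub>i \<noteq> 0\<close>, \<open>\<lambda>\<^sub>i \<noteq> 1\<close>) makes \<open>\<Sum> c\<^sub>j p\<^sub>j\<close>, of degree \<open>< m \<le> k\<^sub>1\<close>, vanish at the
  \<open>k\<^sub>1\<close> distinct \<open>\<lambda>\<^sub>i\<close>; hence it is zero, and triangularity gives \<open>c = 0\<close>.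
\<close>

section \<open>Moore--Penrose conditions and orthogonal columns\<close>

definition penrose :: "real mat \<Rightarrow> real mat \<Rightarrow> bool" where
  "penrose A X \<longleftrightarrow> X \<in> carrier_mat (dim_col A) (dim_row A)
     \<and> A * X * A = A \<and> X * A * X = X
     \<and> transpose_mat (A * X) = A * X \<and> transpose_mat (X * A) = X * A"

lemma penrose_transpose:
  assumes "penrose A X" shows "penrose (transpose_mat A) (transpose_mat X)"
proof -
  have A: "A \<in> carrier_mat (dim_row A) (dim_col A)" by simp
  have X: "X \<in> carrier_mat (dim_col A) (dim_row A)" using assms unfolding penrose_def by simp
  have AX: "transpose_mat A * transpose_mat X = X * A"
    using transpose_mult[OF X A] assms unfolding penrose_def by simp
  have XA: "transpose_mat X * transpose_mat A = A * X"
    using transpose_mult[OF A X] assms unfolding penrose_def by simp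
  have "transpose_mat (A * X * A) = transpose_mat A * (transpose_mat X * transpose_mat A)"
    using transpose_mult[OF mult_carrier_mat[OF A X] A] transpose_mult[OF A X] by simp
  also have "\<dots> = transpose_mat A * transpose_mat X * transpose_mat A"
    using X by (simp add: assoc_mult_mat[of _ "dim_col A" "dim_row A" _ "dim_col A" _ "dim_row A"])
  finally have AXA: "transpose_mat A * transpose_mat X * transpose_mat A = transpose_mat A"
    using assms unfolding penrose_def by simp
  have "transpose_mat (X * A * X) = transpose_mat X * (transpose_mat A * transpose_mat X)"
    using transpose_mult[OF mult_carrier_mat[OF X A] X] transpose_mult[OF X A] by simp
  also have "\<dots> = transpose_mat X * transpose_mat A * transpose_mat X"
    using X by (simp add: assoc_mult_mat[of _ "dim_row A" "dim_col A" _ "dim_row A" _ "dim_col A"])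
  finally have XAX: "transpose_mat X * transpose_mat A * transpose_mat X = transpose_mat X"
    using assms unfolding penrose_def by simp
  show ?thesis
    using assms X AXA XAX unfolding penrose_def AX XA by simp
qed

lemma penrose_mult_right_eq:
  assumes X: "penrose A X" and Y: "penrose A Y" shows "A * X = A * Y"
proof -
  have A: "A \<in> carrier_mat (dim_row A) (dim_col A)" by simp
  have Xc: "X \<in> carrier_mat (dim_col A) (dim_row A)" and Yc: "Y \<in> carrier_mat (dim_col A) (dim_row A)"
    using X Y unfolding penrose_def by auto
  have "A * X = transpose_mat (A * X)" using X unfolding penrose_def by simp
  also have "\<dots> = transpose_mat X * transpose_mat (A * Y * A)"
    using transpose_mult[OF A Xc] Y unfolding penrose_def by simp
  also have "\<dots> = transpose_mat X * (transpose_mat A * transpose_mat (A * Y))"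
    using transpose_mult[OF mult_carrier_mat[OF A Yc] A] by simp
  also have "\<dots> = transpose_mat X * transpose_mat A * transpose_mat (A * Y)"
    by (rule assoc_mult_mat[symmetric]) (use Xc Yc in auto)
  also have "\<dots> = transpose_mat (A * X) * transpose_mat (A * Y)"
    using transpose_mult[OF A Xc] by simp
  also have "\<dots> = A * X * (A * Y)" using X Y unfolding penrose_def by simp
  also have "\<dots> = A * X * A * Y"
    using assoc_mult_mat[OF mult_carrier_mat[OF A Xc] A Yc] by simp
  also have "\<dots> = A * Y" using X unfolding penrose_def by simp
  finally show ?thesis .
qed

lemma penrose_unique:
  assumes X: "penrose A X" and Y: "penrose A Y" shows "X = Y"
proof -
  have A: "A \<in> carrier_mat (dim_row A) (dim_col A)" by simp
  have Xc: "X \<in> carrier_mat (dim_col A) (dim_row A)" and Yc: "Y \<in> carrier_mat (dim_col A) (dim_row A)"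
    using X Y unfolding penrose_def by auto
  have AX: "A * X = A * Y" by (rule penrose_mult_right_eq[OF X Y])
  have "transpose_mat A * transpose_mat X = transpose_mat A * transpose_mat Y"
    by (rule penrose_mult_right_eq[OF penrose_transpose[OF X] penrose_transpose[OF Y]])
  hence "transpose_mat (X * A) = transpose_mat (Y * A)"
    using transpose_mult[OF Xc A] transpose_mult[OF Yc A] by simp
  hence XA: "X * A = Y * A" by (metis transpose_transpose)
  have "X = X * A * X" using X unfolding penrose_def by simp
  also have "\<dots> = Y * A * Y"
    using XA AX assoc_mult_mat[OF Xc A Xc] assoc_mult_mat[OF Yc A Yc] assoc_mult_mat[OF Yc A Xc] by simp
  also have "\<dots> = Y" using Y unfolding penrose_def by simp
  finally show ?thesis .
qed

lemma pinv_eqI: "penrose A X \<Longrightarrow> pinv A = X"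
  unfolding pinv_def using penrose_unique unfolding penrose_def by blast

lemma real_scalar_prod_self_eq_0_iff:
  fixes v :: "real vec" assumes "v \<in> carrier_vec n"
  shows "v \<bullet> v = 0 \<longleftrightarrow> v = 0\<^sub>v n"
proof -
  have "conjugate v = v" by (rule eq_vecI) auto
  thus ?thesis using conjugate_square_eq_0_vec[OF assms] by simp
qed

definition orthogonal_vecs :: "nat \<Rightarrow> real vec list \<Rightarrow> bool" where
  "orthogonal_vecs n zl \<longleftrightarrow> set zl \<subseteq> carrier_vec n \<and>
     (\<forall>i<length zl. \<forall>j<length zl. i \<noteq> j \<longrightarrow> zl ! i \<bullet> zl ! j = 0)"

text \<open>A zero column gives a zero row, because \<open>x / 0 = 0\<close>.\<close>
definition orth_pinv :: "nat \<Rightarrow> real vec list \<Rightarrow> real mat" where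
  "orth_pinv n zl = mat (length zl) n (\<lambda>(j, r). zl ! j $ r / (zl ! j \<bullet> zl ! j))"

lemma orthogonal_vecs_snoc:
  assumes "orthogonal_vecs n zl" and "z \<in> carrier_vec n"
    and "\<forall>i<length zl. zl ! i \<bullet> z = 0"
  shows "orthogonal_vecs n (zl @ [z])"
proof -
  have "z \<bullet> zl ! i = 0" if "i < length zl" for i
  proof -
    have zi: "zl ! i \<in> carrier_vec n"
      using assms(1) that unfolding orthogonal_vecs_def by (meson nth_mem subsetD)
    show ?thesis using comm_scalar_prod[OF assms(2) zi] assms(3) that by simp
  qed
  with assms show ?thesis
    unfolding orthogonal_vecs_def by (auto simp: nth_append less_Suc_eq)
qed

definition nonzero_diag :: "nat \<Rightarrow> real vec list \<Rightarrow> real mat" where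
  "nonzero_diag n zl = mat (length zl) (length zl) (\<lambda>(i, j). if i = j \<and> zl ! i \<noteq> 0\<^sub>v n then 1 else 0)"

lemma orth_pinv_mult_cols:
  assumes o: "orthogonal_vecs n zl"
  shows "orth_pinv n zl * mat_of_cols n zl = nonzero_diag n zl"
proof (rule eq_matI)
  fix i j assume "i < dim_row (nonzero_diag n zl)" "j < dim_col (nonzero_diag n zl)"
  hence i: "i < length zl" and j: "j < length zl" by (auto simp: nonzero_diag_def)
  have zi: "zl ! i \<in> carrier_vec n" and zj: "zl ! j \<in> carrier_vec n"
    using o i j unfolding orthogonal_vecs_def by auto
  have "(orth_pinv n zl * mat_of_cols n zl) $$ (i, j) = (zl ! i \<bullet> zl ! j) / (zl ! i \<bullet> zl ! i)"
    using i j zi zj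
    by (simp add: orth_pinv_def scalar_prod_def sum_divide_distrib mult.commute)
  also have "\<dots> = nonzero_diag n zl $$ (i, j)"
    using o i j real_scalar_prod_self_eq_0_iff[OF zi]
    unfolding orthogonal_vecs_def nonzero_diag_def by auto
  finally show "(orth_pinv n zl * mat_of_cols n zl) $$ (i, j) = nonzero_diag n zl $$ (i, j)" .
qed (auto simp: orth_pinv_def nonzero_diag_def)

lemma cols_mult_nonzero_diag:
  assumes "set zl \<subseteq> carrier_vec n"
  shows "mat_of_cols n zl * nonzero_diag n zl = mat_of_cols n zl"
proof (rule eq_matI)
  fix r j assume "r < dim_row (mat_of_cols n zl)" "j < dim_col (mat_of_cols n zl)"
  hence r: "r < n" and j: "j < length zl" by auto
  have "(mat_of_cols n zl * nonzero_diag n zl) $$ (r, j)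
      = (\<Sum>i = 0..<length zl. mat_of_cols n zl $$ (r, i) * nonzero_diag n zl $$ (i, j))"
    using r j by (simp add: scalar_prod_def nonzero_diag_def)
  also have "\<dots> = (\<Sum>i\<in>{j}. mat_of_cols n zl $$ (r, i) * nonzero_diag n zl $$ (i, j))"
    by (rule sum.mono_neutral_right) (use j in \<open>auto simp: nonzero_diag_def\<close>)
  also have "\<dots> = mat_of_cols n zl $$ (r, j)"
    using r j assms by (auto simp: nonzero_diag_def mat_of_cols_index)
  finally show "(mat_of_cols n zl * nonzero_diag n zl) $$ (r, j) = mat_of_cols n zl $$ (r, j)" .
qed (auto simp: nonzero_diag_def)

lemma nonzero_diag_mult_orth_pinv: "nonzero_diag n zl * orth_pinv n zl = orth_pinv n zl"
proof (rule eq_matI)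
  fix i r assume "i < dim_row (orth_pinv n zl)" "r < dim_col (orth_pinv n zl)"
  hence i: "i < length zl" and r: "r < n" by (auto simp: orth_pinv_def)
  have "(nonzero_diag n zl * orth_pinv n zl) $$ (i, r)
      = (\<Sum>j = 0..<length zl. nonzero_diag n zl $$ (i, j) * orth_pinv n zl $$ (j, r))"
    using i r by (simp add: scalar_prod_def nonzero_diag_def orth_pinv_def)
  also have "\<dots> = (\<Sum>j\<in>{i}. nonzero_diag n zl $$ (i, j) * orth_pinv n zl $$ (j, r))"
    by (rule sum.mono_neutral_right) (use i in \<open>auto simp: nonzero_diag_def\<close>)
  also have "\<dots> = orth_pinv n zl $$ (i, r)"
    using i r by (auto simp: nonzero_diag_def orth_pinv_def)
  finally show "(nonzero_diag n zl * orth_pinv n zl) $$ (i, r) = orth_pinv n zl $$ (i, r)" .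
qed (auto simp: nonzero_diag_def orth_pinv_def)

lemma cols_mult_orth_pinv_symmetric:
  "transpose_mat (mat_of_cols n zl * orth_pinv n zl) = mat_of_cols n zl * orth_pinv n zl"
    (is "transpose_mat ?P = ?P")
proof -
  have entry: "?P $$ (r, s) = (\<Sum>j<length zl. zl ! j $ r * zl ! j $ s / (zl ! j \<bullet> zl ! j))"
    if "r < n" "s < n" for r s
    using that by (simp add: orth_pinv_def scalar_prod_def mat_of_cols_index lessThan_atLeast0)
  show ?thesis
  proof (rule eq_matI)
    fix r s assume "r < dim_row ?P" "s < dim_col ?P"
    hence r: "r < n" and s: "s < n" by (auto simp: orth_pinv_def)
    have "transpose_mat ?P $$ (r, s) = ?P $$ (s, r)" using r s by (simp add: orth_pinv_def)
    also have "\<dots> = ?P $$ (r, s)" unfolding entry[OF s r] entry[OF r s] by (simp add: ac_simps)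
    finally show "transpose_mat ?P $$ (r, s) = ?P $$ (r, s)" .
  qed (auto simp: orth_pinv_def)
qed

lemma penrose_orth_pinv:
  assumes o: "orthogonal_vecs n zl"
  shows "penrose (mat_of_cols n zl) (orth_pinv n zl)"
proof -
  define Z where "Z = mat_of_cols n zl"
  define X where "X = orth_pinv n zl"
  have Z: "Z \<in> carrier_mat n (length zl)" and X: "X \<in> carrier_mat (length zl) n"
    unfolding Z_def X_def orth_pinv_def by auto
  have XZ: "X * Z = nonzero_diag n zl" unfolding X_def Z_def by (rule orth_pinv_mult_cols[OF o])
  have ZD: "Z * nonzero_diag n zl = Z"
    unfolding Z_def by (rule cols_mult_nonzero_diag) (use o in \<open>simp add: orthogonal_vecs_def\<close>)
  have DX: "nonzero_diag n zl * X = X" unfolding X_def by (rule nonzero_diag_mult_orth_pinv)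
  have "Z * X * Z = Z" using assoc_mult_mat[OF Z X Z] XZ ZD by simp
  moreover have "X * Z * X = X" using XZ DX by simp
  moreover have "transpose_mat (Z * X) = Z * X"
    unfolding Z_def X_def by (rule cols_mult_orth_pinv_symmetric)
  moreover have "transpose_mat (X * Z) = X * Z"
    unfolding XZ by (intro eq_matI) (auto simp: nonzero_diag_def)
  ultimately show ?thesis
    using Z X unfolding penrose_def Z_def[symmetric] X_def[symmetric] by auto
qed

lemma pinv_orthogonal_cols:
  "orthogonal_vecs n zl \<Longrightarrow> pinv (mat_of_cols n zl) = orth_pinv n zl"
  by (rule pinv_eqI[OF penrose_orth_pinv])

lemma penrose_residual_orthogonal:
  assumes p: "penrose Z X" and Z: "Z \<in> carrier_mat n k" and y: "y \<in> carrier_vec n"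
    and j: "j < k"
  shows "col Z j \<bullet> ((1\<^sub>m n - Z * X) *\<^sub>v y) = 0"
proof -
  have X: "X \<in> carrier_mat k n" using p Z unfolding penrose_def by auto
  have ZX: "Z * X \<in> carrier_mat n n" using Z X by auto
  have TZ: "transpose_mat Z \<in> carrier_mat k n" using Z by simp
  have R: "1\<^sub>m n - Z * X \<in> carrier_mat n n" using minus_carrier_mat[OF ZX] by simp
  have "transpose_mat Z * (Z * X) = transpose_mat ((Z * X) * Z)"
    using transpose_mult[OF ZX Z] p unfolding penrose_def by simp
  also have "\<dots> = transpose_mat Z" using p unfolding penrose_def by simp
  finally have "transpose_mat Z * (1\<^sub>m n - Z * X) = 0\<^sub>m k n"
    using mult_minus_distrib_mat[OF TZ one_carrier_mat ZX] TZ by simp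
  hence "transpose_mat Z *\<^sub>v ((1\<^sub>m n - Z * X) *\<^sub>v y) = 0\<^sub>m k n *\<^sub>v y"
    using assoc_mult_mat_vec[OF TZ R y] by simp
  also have "\<dots> = 0\<^sub>v k" using y by (intro eq_vecI) auto
  finally have "transpose_mat Z *\<^sub>v ((1\<^sub>m n - Z * X) *\<^sub>v y) = 0\<^sub>v k" .
  hence "(transpose_mat Z *\<^sub>v ((1\<^sub>m n - Z * X) *\<^sub>v y)) $ j = 0" using j by simp
  thus ?thesis using j Z by simp
qed

section \<open>Eigenvectors and polynomials\<close>

lemma power_sums_eq_0_imp_eq_0:
  fixes lam x :: "'a \<Rightarrow> 'b::idom"
  assumes fin: "finite I" and inj: "inj_on lam I"
    and sums: "\<And>k. (\<Sum>i\<in>I. lam i ^ k * x i) = 0" and i0: "i0 \<in> I"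
  shows "x i0 = 0"
proof -
  txt \<open>Combine the power sums with the coefficients of a polynomial vanishing at every
    \<open>lam i\<close> except \<open>lam i0\<close>.\<close>
  define Q where "Q = (\<Prod>j\<in>I - {i0}. [:- lam j, 1:])"
  have poly_Q: "poly Q y = (\<Prod>j\<in>I - {i0}. y - lam j)" for y
    unfolding Q_def poly_prod by simp
  have "(\<Sum>i\<in>I. x i * poly Q (lam i)) = (\<Sum>t\<le>degree Q. coeff Q t * (\<Sum>i\<in>I. lam i ^ t * x i))"
    by (simp add: poly_altdef sum_distrib_left sum_distrib_right ac_simps sum.swap[of _ I])
  also have "\<dots> = 0" using sums by simp
  finally have "(\<Sum>i\<in>I. x i * poly Q (lam i)) = 0" .
  moreover have "poly Q (lam i) = 0" if "i \<in> I - {i0}" for i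
    unfolding poly_Q using fin that by (intro prod_zero) auto
  ultimately have "x i0 * poly Q (lam i0) = 0"
    using fin i0 by (simp add: sum.remove)
  moreover have "poly Q (lam i0) \<noteq> 0"
    unfolding poly_Q using fin inj i0 by (subst prod_zero_iff) (auto simp: inj_on_def)
  ultimately show ?thesis by simp
qed

lemma mult_mat_vec_index_lincomb:
  fixes A :: "'a::comm_semiring_1 mat"
  assumes A: "A \<in> carrier_mat m n" and w: "w \<in> carrier_vec n"
    and u: "\<And>i. i \<in> I \<Longrightarrow> u i \<in> carrier_vec n"
    and comb: "\<And>s. s < n \<Longrightarrow> w $ s = (\<Sum>i\<in>I. c i * u i $ s)" and r: "r < m"
  shows "(A *\<^sub>v w) $ r = (\<Sum>i\<in>I. c i * (A *\<^sub>v u i) $ r)"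
proof -
  have "(A *\<^sub>v w) $ r = (\<Sum>s = 0..<n. A $$ (r, s) * (\<Sum>i\<in>I. c i * u i $ s))"
    using A w r comb by (simp add: scalar_prod_def)
  also have "\<dots> = (\<Sum>i\<in>I. c i * (\<Sum>s = 0..<n. A $$ (r, s) * u i $ s))"
    by (simp add: sum_distrib_left sum.swap[of _ I] ac_simps)
  also have "\<dots> = (\<Sum>i\<in>I. c i * (A *\<^sub>v u i) $ r)"
    using A r u[THEN carrier_vecD] by (intro sum.cong) (auto simp: scalar_prod_def)
  finally show ?thesis .
qed

lemma mat_pow_mult_eigenvector:
  fixes A :: "'a::field mat"
  assumes A: "A \<in> carrier_mat n n" and v: "v \<in> carrier_vec n" and eig: "A *\<^sub>v v = lam \<cdot>\<^sub>v v"
  shows "A ^\<^sub>m k *\<^sub>v v = lam ^ k \<cdot>\<^sub>v v"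
proof (induction k)
  case (Suc k)
  have "A ^\<^sub>m Suc k *\<^sub>v v = A ^\<^sub>m k *\<^sub>v (A *\<^sub>v v)"
    using assoc_mult_mat_vec[OF pow_carrier_mat[OF A] A v] by simp
  also have "\<dots> = lam \<cdot>\<^sub>v (A ^\<^sub>m k *\<^sub>v v)"
    unfolding eig by (rule mult_mat_vec[OF pow_carrier_mat[OF A, of k] v])
  finally show ?case using Suc by (simp add: smult_smult_assoc)
qed (use A v in simp)

lemma eigenvector_lincomb_eq_0:
  fixes A :: "'a::field mat"
  assumes A: "A \<in> carrier_mat n n" and fin: "finite I" and inj: "inj_on lam I"
    and v: "\<And>i. i \<in> I \<Longrightarrow> v i \<in> carrier_vec n"
    and eig: "\<And>i. i \<in> I \<Longrightarrow> A *\<^sub>v v i = lam i \<cdot>\<^sub>v v i"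
    and comb: "\<And>r. r < n \<Longrightarrow> (\<Sum>i\<in>I. a i * v i $ r) = 0"
    and i0: "i0 \<in> I" and v0: "v i0 \<noteq> 0\<^sub>v n"
  shows "a i0 = 0"
proof -
  have Av: "(A ^\<^sub>m k *\<^sub>v v i) $ r = lam i ^ k * v i $ r" if "i \<in> I" "r < n" for i k r
    using mat_pow_mult_eigenvector[OF A v eig, OF that(1) that(1)] that v[OF that(1)] by simp
  have "(\<Sum>i\<in>I. lam i ^ k * (a i * v i $ r)) = 0" if r: "r < n" for k r
  proof -
    define w where "w = vec n (\<lambda>s. \<Sum>i\<in>I. a i * v i $ s)"
    have "w = 0\<^sub>v n" unfolding w_def using comb by (intro eq_vecI) auto
    hence "0 = (A ^\<^sub>m k *\<^sub>v w) $ r" using A r by simp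
    also have "\<dots> = (\<Sum>i\<in>I. a i * (A ^\<^sub>m k *\<^sub>v v i) $ r)"
      using A v r by (intro mult_mat_vec_index_lincomb) (auto simp: w_def)
    finally show ?thesis using Av r by (simp add: ac_simps)
  qed
  hence "a i0 * v i0 $ r = 0" if "r < n" for r
    using power_sums_eq_0_imp_eq_0[OF fin inj _ i0, of "\<lambda>i. a i * v i $ r"] that by simp
  moreover obtain r where "r < n" "v i0 $ r \<noteq> 0"
    using v0 v[OF i0] by (metis carrier_vecD eq_vecI index_zero_vec)
  ultimately show ?thesis by fastforce
qed

lemma triangular_poly_lincomb_eq_0:
  fixes P :: "nat \<Rightarrow> 'a::comm_ring_1 poly"
  assumes "\<And>j. j < m \<Longrightarrow> degree (P j) \<le> j \<and> coeff (P j) j = 1"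
    and "(\<Sum>j<m. smult (c j) (P j)) = 0"
  shows "j < m \<Longrightarrow> c j = 0"
  using assms
proof (induction m)
  case (Suc m)
  have "coeff (P j) m = 0" if "j < m" for j
    using Suc.prems(2)[of j] that by (intro coeff_eq_0) auto
  hence "coeff (\<Sum>j<m. smult (c j) (P j)) m = 0" by (simp add: coeff_sum)
  moreover have "coeff (\<Sum>j<Suc m. smult (c j) (P j)) m = 0" using Suc.prems(3) by simp
  ultimately have cm: "c m = 0" using Suc.prems(2)[of m] by simp
  hence "(\<Sum>j<m. smult (c j) (P j)) = 0" using Suc.prems(3) by simp
  thus ?case using Suc.IH Suc.prems(1,2) cm by (cases "j = m") auto
qed simp

section \<open>The recursions for \<open>z\<^sub>l\<close> and \<open>w\<^sub>j\<close>\<close>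

lemma zs_length: "length (zs S F th l) = Suc l"
  by (induction l) (auto simp: Let_def)

lemma zs_Suc: "zs S F th (Suc l) = zs S F th l
    @ [(1\<^sub>m (dim_vec th) - Zmat S F th l * pinv (Zmat S F th l)) *\<^sub>v yv S F th (l + 2)]"
  by (simp add: Zmat_def Let_def)

declare zs.simps(2) [simp del]

lemma zs_nth: "i \<le> l \<Longrightarrow> zs S F th l ! i = zv S F th i"
proof (induction l)
  case (Suc l)
  show ?case
  proof (cases "i \<le> l")
    case True
    thus ?thesis using Suc zs_length[of S F th l] by (simp add: zs_Suc nth_append)
  next
    case False
    hence "i = Suc l" using Suc.prems by simp
    thus ?thesis using zs_length[of S F th l] by (simp add: zv_def zs_Suc nth_append)
  qed
qed (simp add: zv_def)

lemma yv_carrier: "yv S F th n \<in> carrier_vec (dim_row (pinv F))"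
  unfolding yv_def by (simp add: carrier_vecI)

lemma orthogonal_vecs_zs:
  assumes d: "dim_row (pinv F) = dim_vec th"
  shows "orthogonal_vecs (dim_vec th) (zs S F th l)"
proof (induction l)
  case 0
  show ?case using yv_carrier[of S F th 1] d unfolding orthogonal_vecs_def by simp
next
  case (Suc l)
  define Z where "Z = Zmat S F th l"
  have p: "penrose Z (pinv Z)"
    using penrose_orth_pinv[OF Suc] pinv_orthogonal_cols[OF Suc] unfolding Z_def Zmat_def by simp
  have Z: "Z \<in> carrier_mat (dim_vec th) (Suc l)"
    using mat_of_cols_carrier(1)[of "dim_vec th" "zs S F th l"] unfolding Z_def Zmat_def zs_length .
  have y: "yv S F th (l + 2) \<in> carrier_vec (dim_vec th)" using yv_carrier d by metis
  have "zs S F th l ! i \<bullet> ((1\<^sub>m (dim_vec th) - Z * pinv Z) *\<^sub>v yv S F th (l + 2)) = 0"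
    if i: "i < length (zs S F th l)" for i
  proof -
    have "col Z i = zs S F th l ! i"
      using Suc i unfolding Z_def Zmat_def orthogonal_vecs_def by (intro col_mat_of_cols) auto
    thus ?thesis using penrose_residual_orthogonal[OF p Z y i[unfolded zs_length]] by simp
  qed
  thus ?case unfolding zs_Suc Z_def[symmetric]
    by (intro orthogonal_vecs_snoc[OF Suc]) (use Z in \<open>auto intro!: carrier_vecI\<close>)
qed

lemma zv_orthogonal:
  assumes "dim_row (pinv F) = dim_vec th" and "i \<noteq> j"
  shows "zv S F th i \<bullet> zv S F th j = 0"
proof -
  have "zv S F th i = zs S F th (max i j) ! i" "zv S F th j = zs S F th (max i j) ! j"
    by (simp_all add: zs_nth)
  thus ?thesis using orthogonal_vecs_zs[OF assms(1), of S "max i j"] assms(2)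
    unfolding orthogonal_vecs_def by (auto simp: zs_length)
qed

lemma zs_of_zero_vec:
  assumes "th = 0\<^sub>v N" and "z \<in> set (zs S F th l)"
  shows "z = 0\<^sub>v (dim_vec z)"
proof -
  have y0: "yv S F th n = 0\<^sub>v (dim_row (pinv F))" for n
    unfolding yv_def assms(1) by (intro eq_vecI) (auto simp: scalar_prod_def)
  show ?thesis using assms(2)
  proof (induction l arbitrary: z)
    case 0 thus ?case using y0 by auto
  next
    case (Suc l) thus ?case using y0 by (auto simp: zs_Suc scalar_prod_def intro!: eq_vecI)
  qed
qed

lemma zv_of_zero_vec_scalar_prod:
  assumes "th = 0\<^sub>v N"
  shows "zv S F th i \<bullet> zv S F th j = 0"
proof -
  have "zv S F th j \<in> set (zs S F th j)"
    unfolding zv_def by (rule last_in_set) (simp add: zs_length flip: length_greater_0_conv)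
  hence "zv S F th j = 0\<^sub>v (dim_vec (zv S F th j))" by (rule zs_of_zero_vec[OF assms])
  hence "zv S F th i \<bullet> zv S F th j = zv S F th i \<bullet> 0\<^sub>v (dim_vec (zv S F th j))"
    by (rule arg_cong)
  thus ?thesis by (simp add: scalar_prod_def)
qed

lemma pinv_Zmat_carrier:
  assumes "dim_row (pinv F) = dim_vec th"
  shows "pinv (Zmat S F th k) \<in> carrier_mat (Suc k) (dim_vec th)"
  using pinv_orthogonal_cols[OF orthogonal_vecs_zs[OF assms]]
  by (simp add: Zmat_def orth_pinv_def zs_length)

lemma Ycols_length: "length (Ycols S F th n) = n - 1"
  by (induction S F th n rule: Ycols.induct) auto

lemma Ycols_carrier:
  assumes "dim_row (pinv F) = dim_vec th"
  shows "set (Ycols S F th n) \<subseteq> carrier_vec (dim_vec th)"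
  using assms
  by (induction S F th n rule: Ycols.induct)
     (auto intro!: carrier_vecI simp: Ycols_length yv_carrier[THEN carrier_vecD])

lemma Ycols_Suc_nth: "t < length (Ycols S F th n) \<Longrightarrow> Ycols S F th (Suc n) ! t = Ycols S F th n ! t"
  by (induction S F th n rule: Ycols.induct) (auto simp: nth_append)

lemma Ycols_nth_mono:
  "a \<le> b \<Longrightarrow> t < length (Ycols S F th a) \<Longrightarrow> Ycols S F th b ! t = Ycols S F th a ! t"
proof (induction b rule: dec_induct)
  case (step b)
  thus ?case using Ycols_Suc_nth[of t S F th b] by (simp add: Ycols_length)
qed simp

text \<open>\<open>wcol j\<close> is the paper's \<open>w\<^sub>j\<^sub>+\<^sub>1\<close>, the column \<open>j\<close> (counted from 0) of \<open>[y\<^sub>1, Y\<^sub>n]\<close> for every \<open>n > j\<close>.\<close>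
definition wcol :: "real mat \<Rightarrow> real mat \<Rightarrow> real vec \<Rightarrow> nat \<Rightarrow> real vec" where
  "wcol S F th j = (if j = 0 then yv S F th 1 else Ycols S F th (Suc j) ! (j - 1))"

lemma take_cols_Wmat:
  assumes d: "dim_row (pinv F) = dim_vec th" and m: "m \<le> n"
  shows "take m (cols (Wmat S F th n)) = map (wcol S F th) [0..<m]"
proof -
  have "cols (Wmat S F th n) = yv S F th 1 # Ycols S F th n"
    unfolding Wmat_def using Ycols_carrier[OF d] yv_carrier[of S F th 1] d
    by (intro cols_mat_of_cols) auto
  moreover have "(yv S F th 1 # Ycols S F th n) ! j = wcol S F th j" if j: "j < m" for j
  proof (cases j)
    case (Suc t)
    thus ?thesis using j m Ycols_nth_mono[of "Suc (Suc t)" n t S F th]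
      by (simp add: wcol_def Ycols_length)
  qed (simp add: wcol_def)
  ultimately show ?thesis using m by (intro nth_equalityI) (auto simp: Ycols_length)
qed

lemma wcol_Suc_Suc_index:
  assumes d: "dim_row (pinv F) = dim_vec th" and r: "r < dim_vec th"
  shows "wcol S F th (Suc (Suc k)) $ r = yv S F th (k + 3) $ r
     - (\<Sum>s<Suc k. wcol S F th (Suc s) $ r * (pinv (Zmat S F th k) *\<^sub>v yv S F th (k + 2)) $ s)"
proof -
  define N where "N = dim_vec th"
  define Y where "Y = mat_of_cols N (Ycols S F th (Suc (Suc k)))"
  define X where "X = pinv (Zmat S F th k)"
  define y where "y = yv S F th (k + 2)"
  have Y: "Y \<in> carrier_mat N (Suc k)"
    using mat_of_cols_carrier(1)[of N "Ycols S F th (Suc (Suc k))"] unfolding Y_def Ycols_length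
    by simp
  have X: "X \<in> carrier_mat (Suc k) N" unfolding X_def N_def by (rule pinv_Zmat_carrier[OF d])
  have y: "y \<in> carrier_vec N" unfolding y_def N_def using yv_carrier d by metis
  have "wcol S F th (Suc (Suc k)) = yv S F th (k + 3) - (Y * X) *\<^sub>v y"
    by (simp add: wcol_def Y_def X_def y_def N_def nth_append Ycols_length numeral_3_eq_3)
  also have "(Y * X) *\<^sub>v y = Y *\<^sub>v (X *\<^sub>v y)" by (rule assoc_mult_mat_vec[OF Y X y])
  finally have "wcol S F th (Suc (Suc k)) $ r = yv S F th (k + 3) $ r
      - (\<Sum>s<Suc k. Y $$ (r, s) * (X *\<^sub>v y) $ s)"
    using r Y X y unfolding N_def
    by (simp add: scalar_prod_def lessThan_atLeast0 carrier_vecD yv_carrier[THEN carrier_vecD] d)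
  moreover have "Y $$ (r, s) = wcol S F th (Suc s) $ r" if "s < Suc k" for s
    using that r Ycols_nth_mono[of "Suc (Suc s)" "Suc (Suc k)" s S F th]
    by (simp add: Y_def N_def mat_of_cols_index Ycols_length wcol_def)
  ultimately show ?thesis unfolding X_def y_def by simp
qed

section \<open>Polynomial form of the columns \<open>w\<^sub>j\<close>\<close>

locale excited_modes =
  fixes S F :: "real mat" and \<theta>0 :: "real vec" and n\<theta> nx k1 k2 :: nat
    and \<rho> lam :: "nat \<Rightarrow> complex" and v :: "nat \<Rightarrow> complex vec"
  assumes S: "S \<in> carrier_mat n\<theta> n\<theta>"
    and F: "F \<in> carrier_mat nx n\<theta>"
    and th: "\<theta>0 \<in> carrier_vec n\<theta>"
    and rho: "\<forall>i\<in>{1..k1+k2}. \<rho> i \<noteq> 0"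
    and vdim: "\<forall>i\<in>{1..k1+k2}. v i \<in> carrier_vec n\<theta> \<and> v i \<noteq> 0\<^sub>v n\<theta>"
    and eig: "\<forall>i\<in>{1..k1+k2}. map_mat complex_of_real S *\<^sub>v v i = lam i \<cdot>\<^sub>v v i"
    and decomp: "\<forall>r<n\<theta>. complex_of_real (\<theta>0 $ r) = (\<Sum>i\<in>{1..k1+k2}. \<rho> i * (v i $ r))"
    and modes1: "\<forall>i\<in>{1..k1}. map_mat complex_of_real (pinv F * F) *\<^sub>v v i = v i"
    and modes2: "\<forall>i\<in>{k1+1..k1+k2}. map_mat complex_of_real (pinv F * F) *\<^sub>v v i = 0\<^sub>v n\<theta>"
    and pinv_dim: "dim_row (pinv F) = n\<theta>"
begin

abbreviation "Sc \<equiv> map_mat complex_of_real S"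
abbreviation "Pc \<equiv> map_mat complex_of_real (pinv F * F)"

lemma Sc_carrier: "Sc \<in> carrier_mat n\<theta> n\<theta>"
  using S by simp

lemma Pc_carrier: "Pc \<in> carrier_mat n\<theta> n\<theta>"
  using F pinv_dim by (intro carrier_matI) auto

lemma mode_matrix_carrier: "Pc * Sc ^\<^sub>m k * (Sc - 1\<^sub>m n\<theta>) \<in> carrier_mat n\<theta> n\<theta>"
  using mult_carrier_mat[OF mult_carrier_mat[OF Pc_carrier pow_carrier_mat[OF Sc_carrier]]
      minus_carrier_mat[OF one_carrier_mat]] by blast

lemma of_real_yv:
  "map_vec complex_of_real (yv S F \<theta>0 (Suc k))
     = (Pc * Sc ^\<^sub>m k * (Sc - 1\<^sub>m n\<theta>)) *\<^sub>v map_vec complex_of_real \<theta>0"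
proof -
  have P: "pinv F * F \<in> carrier_mat n\<theta> n\<theta>" using F pinv_dim by (intro carrier_matI) auto
  have Sk: "S ^\<^sub>m k \<in> carrier_mat n\<theta> n\<theta>" using S by simp
  have S1: "S - 1\<^sub>m n\<theta> \<in> carrier_mat n\<theta> n\<theta>" using minus_carrier_mat[OF one_carrier_mat] by blast
  define M where "M = pinv F * F * S ^\<^sub>m k * (S - 1\<^sub>m n\<theta>)"
  have M: "M \<in> carrier_mat n\<theta> n\<theta>" unfolding M_def using P Sk S1 by auto
  have "map_mat complex_of_real (S - 1\<^sub>m n\<theta>) = Sc - 1\<^sub>m n\<theta>"
    using S by (intro eq_matI) auto
  hence hom: "map_mat complex_of_real M = Pc * Sc ^\<^sub>m k * (Sc - 1\<^sub>m n\<theta>)"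
    unfolding M_def
    by (simp only: of_real_hom.mat_hom_mult[OF mult_carrier_mat[OF P Sk] S1]
        of_real_hom.mat_hom_mult[OF P Sk] of_real_hom.mat_hom_pow[OF S])
  have "yv S F \<theta>0 (Suc k) = M *\<^sub>v \<theta>0" using S by (simp add: yv_def M_def)
  hence "map_vec complex_of_real (yv S F \<theta>0 (Suc k))
      = map_mat complex_of_real M *\<^sub>v map_vec complex_of_real \<theta>0"
    using of_real_hom.mult_mat_vec_hom[OF M th] by simp
  thus ?thesis unfolding hom .
qed

lemma mode_image:
  assumes i: "i \<in> {1..k1+k2}"
  shows "(Pc * Sc ^\<^sub>m k * (Sc - 1\<^sub>m n\<theta>)) *\<^sub>v v i = (lam i ^ k * (lam i - 1)) \<cdot>\<^sub>v (Pc *\<^sub>v v i)"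
proof -
  have vi: "v i \<in> carrier_vec n\<theta>" using vdim i by auto
  have Sk: "Sc ^\<^sub>m k \<in> carrier_mat n\<theta> n\<theta>" using Sc_carrier by simp
  have S1: "Sc - 1\<^sub>m n\<theta> \<in> carrier_mat n\<theta> n\<theta>" using minus_carrier_mat[OF one_carrier_mat] by blast
  have "(Sc - 1\<^sub>m n\<theta>) *\<^sub>v v i = (lam i - 1) \<cdot>\<^sub>v v i"
    using minus_mult_distrib_mat_vec[OF Sc_carrier one_carrier_mat vi] eig i vi
    by (auto intro!: eq_vecI simp: algebra_simps)
  moreover have "Sc ^\<^sub>m k *\<^sub>v v i = lam i ^ k \<cdot>\<^sub>v v i"
    using mat_pow_mult_eigenvector[OF Sc_carrier vi] eig i by simp
  ultimately have "(Sc ^\<^sub>m k * (Sc - 1\<^sub>m n\<theta>)) *\<^sub>v v i = (lam i ^ k * (lam i - 1)) \<cdot>\<^sub>v v i"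
    using assoc_mult_mat_vec[OF Sk S1 vi] mult_mat_vec[OF Sk vi]
    by (simp add: smult_smult_assoc mult.commute)
  thus ?thesis
    using assoc_mult_mat_vec[OF Pc_carrier mult_carrier_mat[OF Sk S1] vi] mult_mat_vec[OF Pc_carrier vi]
      assoc_mult_mat[OF Pc_carrier Sk S1] by simp
qed

definition mode_comb :: "complex poly \<Rightarrow> nat \<Rightarrow> complex" where
  "mode_comb p r = (\<Sum>i\<in>{1..k1}. \<rho> i * (lam i - 1) * poly p (lam i) * v i $ r)"

lemma mode_comb_diff: "mode_comb (p - q) r = mode_comb p r - mode_comb q r"
  unfolding mode_comb_def sum_subtractf[symmetric] by (intro sum.cong) (simp_all add: algebra_simps)

lemma mode_comb_sum_smult:
  "mode_comb (\<Sum>s\<in>T. smult (c s) (P s)) r = (\<Sum>s\<in>T. c s * mode_comb (P s) r)"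
  by (simp add: mode_comb_def poly_sum sum_distrib_left sum_distrib_right sum.swap[of _ T] ac_simps)

lemma yv_mode_comb:
  assumes r: "r < n\<theta>"
  shows "complex_of_real (yv S F \<theta>0 (Suc k) $ r) = mode_comb (monom 1 k) r"
proof -
  let ?M = "Pc * Sc ^\<^sub>m k * (Sc - 1\<^sub>m n\<theta>)"
  let ?c = "\<lambda>i. \<rho> i * (lam i ^ k * (lam i - 1)) * (Pc *\<^sub>v v i) $ r"
  have M: "?M \<in> carrier_mat n\<theta> n\<theta>" by (rule mode_matrix_carrier)
  have "complex_of_real (yv S F \<theta>0 (Suc k) $ r) = (?M *\<^sub>v map_vec complex_of_real \<theta>0) $ r"
    using of_real_yv[of k, symmetric] r pinv_dim
    by (metis index_map_vec(1) yv_carrier[THEN carrier_vecD])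
  also have "\<dots> = (\<Sum>i\<in>{1..k1+k2}. \<rho> i * (?M *\<^sub>v v i) $ r)"
    using M th vdim decomp r by (intro mult_mat_vec_index_lincomb) auto
  also have "\<dots> = (\<Sum>i\<in>{1..k1+k2}. ?c i)"
    using mode_image r Pc_carrier vdim by (intro sum.cong) auto
  also have "\<dots> = (\<Sum>i\<in>{1..k1}. ?c i) + (\<Sum>i\<in>{k1+1..k1+k2}. ?c i)"
    by (subst sum.union_disjoint[symmetric]) (auto intro: sum.cong)
  also have "(\<Sum>i\<in>{k1+1..k1+k2}. ?c i) = 0" using modes2 r by simp
  also have "(\<Sum>i\<in>{1..k1}. ?c i) = mode_comb (monom 1 k) r"
    unfolding mode_comb_def poly_monom using modes1 by (intro sum.cong) (simp_all add: ac_simps)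
  finally show ?thesis by simp
qed

lemma mode_comb_eq_0_imp_eq_0:
  assumes inj: "inj_on lam {1..k1+k2}" and ne1: "\<forall>i\<in>{1..k1}. lam i \<noteq> 1"
    and zero: "\<forall>r<n\<theta>. mode_comb q r = 0" and deg: "degree q < k1"
  shows "q = 0"
proof -
  have "poly q (lam i) = 0" if i: "i \<in> {1..k1}" for i
  proof -
    have "\<rho> i * (lam i - 1) * poly q (lam i) = 0"
      using zero vdim eig i unfolding mode_comb_def
      by (intro eigenvector_lincomb_eq_0[OF Sc_carrier, of "{1..k1}" lam v
            "\<lambda>i. \<rho> i * (lam i - 1) * poly q (lam i)"])
         (auto intro: inj_on_subset[OF inj])
    thus ?thesis using rho ne1 i by auto
  qed
  moreover have "card (lam ` {1..k1}) = k1"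
    using card_image[OF inj_on_subset[OF inj]] by auto
  ultimately show ?thesis using deg by (intro poly_eqI_degree[of "lam ` {1..k1}"]) auto
qed

definition wcol_poly :: "nat \<Rightarrow> complex poly \<Rightarrow> bool" where
  "wcol_poly j p \<longleftrightarrow> degree p \<le> j \<and> coeff p j = 1 \<and>
     (\<forall>r<n\<theta>. complex_of_real (wcol S F \<theta>0 j $ r) = mode_comb p r)"

lemma wcol_poly_Suc_Suc:
  assumes P: "\<And>s. s < Suc k \<Longrightarrow> wcol_poly (Suc s) (P (Suc s))"
  defines "e \<equiv> pinv (Zmat S F \<theta>0 k) *\<^sub>v yv S F \<theta>0 (k + 2)"
  shows "wcol_poly (Suc (Suc k))
           (monom 1 (Suc (Suc k)) - (\<Sum>s<Suc k. smult (complex_of_real (e $ s)) (P (Suc s))))"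
proof -
  define R where "R = (\<Sum>s<Suc k. smult (complex_of_real (e $ s)) (P (Suc s)))"
  have degR: "degree R \<le> Suc k" unfolding R_def
  proof (rule degree_sum_le)
    fix s assume "s \<in> {..<Suc k}"
    hence "degree (P (Suc s)) \<le> Suc k" using P[of s] by (auto simp: wcol_poly_def)
    thus "degree (smult (complex_of_real (e $ s)) (P (Suc s))) \<le> Suc k"
      using degree_smult_le order_trans by blast
  qed simp
  have "degree (monom 1 (Suc (Suc k)) - R) \<le> Suc (Suc k)"
    using degR by (intro degree_diff_le) (auto simp: degree_monom_le)
  moreover have "coeff (monom 1 (Suc (Suc k)) - R) (Suc (Suc k)) = 1"
    using degR by (simp add: coeff_eq_0)
  moreover have "complex_of_real (wcol S F \<theta>0 (Suc (Suc k)) $ r) = mode_comb (monom 1 (Suc (Suc k)) - R) r"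
    if r: "r < n\<theta>" for r
  proof -
    have "complex_of_real (wcol S F \<theta>0 (Suc (Suc k)) $ r)
        = complex_of_real (yv S F \<theta>0 (Suc (Suc (Suc k))) $ r)
          - (\<Sum>s<Suc k. complex_of_real (e $ s) * complex_of_real (wcol S F \<theta>0 (Suc s) $ r))"
      using wcol_Suc_Suc_index[of F \<theta>0 r S k] th pinv_dim r
      by (simp del: sum.lessThan_Suc add: e_def ac_simps numeral_3_eq_3)
    also have "(\<Sum>s<Suc k. complex_of_real (e $ s) * complex_of_real (wcol S F \<theta>0 (Suc s) $ r))
        = (\<Sum>s<Suc k. complex_of_real (e $ s) * mode_comb (P (Suc s)) r)"
      using P r by (intro sum.cong) (auto simp: wcol_poly_def)
    also have "complex_of_real (yv S F \<theta>0 (Suc (Suc (Suc k))) $ r) = mode_comb (monom 1 (Suc (Suc k))) r"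
      by (rule yv_mode_comb[OF r])
    finally show ?thesis by (simp del: sum.lessThan_Suc add: mode_comb_diff R_def mode_comb_sum_smult)
  qed
  ultimately show ?thesis unfolding wcol_poly_def R_def by blast
qed

lemma wcol_poly_exists: "\<exists>p. wcol_poly j p"
proof (induction j rule: less_induct)
  case (less j)
  consider "j = 0" | "j = 1" | k where "j = Suc (Suc k)" by (metis One_nat_def not0_implies_Suc)
  thus ?case
  proof cases
    case 1
    thus ?thesis using yv_mode_comb[of _ 0]
      by (intro exI[of _ "monom 1 0"]) (simp add: wcol_poly_def wcol_def)
  next
    case 2
    thus ?thesis using yv_mode_comb[of _ 1]
      by (intro exI[of _ "monom 1 1"]) (simp add: wcol_poly_def wcol_def degree_monom_le numeral_2_eq_2)
  next
    case 3
    have "\<forall>s<j. \<exists>p. wcol_poly s p" using less by blast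
    then obtain P where "\<And>s. s < Suc k \<Longrightarrow> wcol_poly (Suc s) (P (Suc s))"
      using 3 by (metis Suc_mono less_SucI)
    thus ?thesis unfolding 3 by (blast intro: wcol_poly_Suc_Suc)
  qed
qed

lemma wcols_lin_indep:
  assumes inj: "inj_on lam {1..k1+k2}" and ne1: "\<forall>i\<in>{1..k1}. lam i \<noteq> 1"
    and m: "m \<le> k1" and comb: "\<forall>r<n\<theta>. (\<Sum>j<m. wcol S F \<theta>0 j $ r * c j) = 0"
    and j: "j < m"
  shows "c j = 0"
proof -
  obtain P where P: "\<And>j. wcol_poly j (P j)" using wcol_poly_exists by metis
  define q where "q = (\<Sum>j<m. smult (complex_of_real (c j)) (P j))"
  have "mode_comb q r = 0" if r: "r < n\<theta>" for r
  proof -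
    have "mode_comb q r = (\<Sum>j<m. complex_of_real (c j) * complex_of_real (wcol S F \<theta>0 j $ r))"
      unfolding q_def mode_comb_sum_smult using P r by (simp add: wcol_poly_def)
    also have "\<dots> = complex_of_real (\<Sum>j<m. wcol S F \<theta>0 j $ r * c j)"
      by (simp add: ac_simps)
    finally show ?thesis using comb r by simp
  qed
  moreover have "degree q \<le> m - 1" unfolding q_def
  proof (rule degree_sum_le)
    fix i assume "i \<in> {..<m}"
    hence "degree (P i) \<le> m - 1" using P[of i] by (auto simp: wcol_poly_def)
    thus "degree (smult (complex_of_real (c i)) (P i)) \<le> m - 1"
      using degree_smult_le order_trans by blast
  qed simp
  hence "degree q < k1" using j m by linarith
  ultimately have "q = 0" using mode_comb_eq_0_imp_eq_0[OF inj ne1] by blast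
  hence "complex_of_real (c j) = 0"
    using triangular_poly_lincomb_eq_0[of m P "\<lambda>j. complex_of_real (c j)" j] P j
    unfolding q_def wcol_poly_def by blast
  thus ?thesis by simp
qed

lemma Wmat_take_cols_lin_indep:
  assumes inj: "inj_on lam {1..k1+k2}" and ne1: "\<forall>i\<in>{1..k1}. lam i \<noteq> 1"
    and m: "m \<le> min n k1" and c: "c \<in> carrier_vec m"
    and W: "mat_of_cols n\<theta> (take m (cols (Wmat S F \<theta>0 n))) *\<^sub>v c = 0\<^sub>v n\<theta>"
  shows "c = 0\<^sub>v m"
proof -
  have d: "dim_row (pinv F) = dim_vec \<theta>0" using pinv_dim th by simp
  have "(\<Sum>j<m. wcol S F \<theta>0 j $ r * c $ j) = 0" if r: "r < n\<theta>" for r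
  proof -
    have "(mat_of_cols n\<theta> (map (wcol S F \<theta>0) [0..<m]) *\<^sub>v c) $ r = 0"
      using W r take_cols_Wmat[OF d, of m n] m by simp
    thus ?thesis using r c by (simp add: scalar_prod_def mat_of_cols_index lessThan_atLeast0)
  qed
  thus ?thesis using wcols_lin_indep[OF inj ne1, of m "\<lambda>j. c $ j"] m c by (intro eq_vecI) auto
qed

end

theorem lemma1:
  fixes S F :: "real mat" and \<theta>0 :: "real vec" and n\<theta> nx k1 k2 :: nat
    and \<rho> lam :: "nat \<Rightarrow> complex" and v :: "nat \<Rightarrow> complex vec"
  assumes S: "S \<in> carrier_mat n\<theta> n\<theta>"
    and F: "F \<in> carrier_mat nx n\<theta>"
    and th: "\<theta>0 \<in> carrier_vec n\<theta>"
    and rho: "\<forall>i\<in>{1..k1+k2}. \<rho> i \<noteq> 0"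
    and vdim: "\<forall>i\<in>{1..k1+k2}. v i \<in> carrier_vec n\<theta> \<and> v i \<noteq> 0\<^sub>v n\<theta>"
    and eig: "\<forall>i\<in>{1..k1+k2}. map_mat complex_of_real S *\<^sub>v v i = lam i \<cdot>\<^sub>v v i"
    and decomp: "\<forall>r<n\<theta>. complex_of_real (\<theta>0 $ r) = (\<Sum>i\<in>{1..k1+k2}. \<rho> i * (v i $ r))"
    and modes1: "\<forall>i\<in>{1..k1}. map_mat complex_of_real (pinv F * F) *\<^sub>v v i = v i"
    and modes2: "\<forall>i\<in>{k1+1..k1+k2}. map_mat complex_of_real (pinv F * F) *\<^sub>v v i = 0\<^sub>v n\<theta>"
  shows "(\<forall>l i j. i \<le> l \<and> j \<le> l \<and> i \<noteq> j \<longrightarrow> zv S F \<theta>0 i \<bullet> zv S F \<theta>0 j = 0)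
       \<and> ((inj_on lam {1..k1+k2} \<and> (\<forall>i\<in>{1..k1}. lam i \<noteq> 1)) \<longrightarrow>
           (\<forall>n m. 1 \<le> n \<and> 1 \<le> m \<and> m \<le> min n k1 \<longrightarrow>
              (\<forall>c \<in> carrier_vec m.
                 mat_of_cols n\<theta> (take m (cols (Wmat S F \<theta>0 n))) *\<^sub>v c = 0\<^sub>v n\<theta> \<longrightarrow> c = 0\<^sub>v m)))"
proof (cases "dim_row (pinv F) = n\<theta>")
  case True
  interpret excited_modes S F \<theta>0 n\<theta> nx k1 k2 \<rho> lam v
    using assms True by unfold_locales auto
  have d: "dim_row (pinv F) = dim_vec \<theta>0" using True th by simp
  show ?thesis
    using zv_orthogonal[OF d] Wmat_take_cols_lin_indep by blast
next
  txt \<open>\<open>pinv\<close> is a definite description, whose existence is never needed: if it has the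
    wrong shape, no excited mode can exist, so \<open>\<theta>\<^sub>0 = 0\<close> and everything degenerates.\<close>
  case False
  have "k1 + k2 = 0"
  proof (rule ccontr)
    assume "k1 + k2 \<noteq> 0"
    hence "dim_vec (map_mat complex_of_real (pinv F * F) *\<^sub>v v 1) = n\<theta>"
      using modes1 modes2 vdim by (cases "1 \<le> k1") auto
    thus False using False by simp
  qed
  moreover have "\<theta>0 = 0\<^sub>v n\<theta>" using decomp th calculation by (intro eq_vecI) auto
  ultimately show ?thesis using zv_of_zero_vec_scalar_prod by auto
qed

end
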